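(* Let $(X,U,f)$ be a robot grid search problem and $k\in\mathbb{N}$. Consider the automaton with state set $X\times U^k$, input alphabet $U$ and transition $\hat f\big((x,(u_1,\ldots,u_k)),u\big):=\big(f(x,u_1),(u_2,\ldots,u_k,u)\big)$. Then $X\times U^k$ is an essential class for this automaton; i.e., every state of $X\times U^k$ is reachable from every other state of $X\times U^k$ by some finite input sequence.
   Context: A robot grid search problem: $X\subset\mathbb{Z}\times\mathbb{Z}$ is finite and connected (any two points are joined by a chain of points in $X$ with consecutive points at Euclidean distance $1$), $U=\{(-1,0),(1,0),(0,1),(0,-1)\}$, and $f(x,u)=x+u$ if $x+u\in X$, $f(x,u)=x$ otherwise. For a transition function, applying a finite input sequence means applying its symbols successively. A state $x'$ is reachable from $x$ if some finite input sequence takes $x$ to $x'$; an essential class is a maximal set of states all mutually reachable. *)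

theory Defs
  imports Main
begin

type_synonym pt = "int \<times> int"

definition U :: "pt set" where
  "U = {(-1,0), (1,0), (0,1), (0,-1)}"

definition padd :: "pt \<Rightarrow> pt \<Rightarrow> pt" where
  "padd x u = (fst x + fst u, snd x + snd u)"

definition adjacent :: "pt \<Rightarrow> pt \<Rightarrow> bool" where
  "adjacent p q \<longleftrightarrow> (fst p - fst q)^2 + (snd p - snd q)^2 = 1"

definition grid_connected :: "pt set \<Rightarrow> bool" where
  "grid_connected X \<longleftrightarrow> (\<forall>p\<in>X. \<forall>q\<in>X. \<exists>c. c \<noteq> [] \<and> hd c = p \<and> last c = q \<and>
      set c \<subseteq> X \<and> (\<forall>i. Suc i < length c \<longrightarrow> adjacent (c ! i) (c ! Suc i)))"

definition robot_f :: "pt set \<Rightarrow> pt \<Rightarrow> pt \<Rightarrow> pt" where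
  "robot_f X x u = (if padd x u \<in> X then padd x u else x)"

definition run :: "('s \<Rightarrow> 'u \<Rightarrow> 's) \<Rightarrow> 's \<Rightarrow> 'u list \<Rightarrow> 's" where
  "run \<delta> s w = foldl \<delta> s w"

definition reachable :: "'u set \<Rightarrow> ('s \<Rightarrow> 'u \<Rightarrow> 's) \<Rightarrow> 's \<Rightarrow> 's \<Rightarrow> bool" where
  "reachable Sig \<delta> s s' \<longleftrightarrow> (\<exists>w. set w \<subseteq> Sig \<and> run \<delta> s w = s')"

definition essential_class :: "'s set \<Rightarrow> 'u set \<Rightarrow> ('s \<Rightarrow> 'u \<Rightarrow> 's) \<Rightarrow> 's set \<Rightarrow> bool" where
  "essential_class S Sig \<delta> C \<longleftrightarrow> C \<noteq> {} \<and> C \<subseteq> S \<and>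
     (\<forall>s\<in>C. \<forall>t\<in>C. reachable Sig \<delta> s t) \<and>
     (\<forall>D. D \<subseteq> S \<and> C \<subseteq> D \<and> (\<forall>s\<in>D. \<forall>t\<in>D. reachable Sig \<delta> s t) \<longrightarrow> D = C)"

definition hist_states :: "pt set \<Rightarrow> nat \<Rightarrow> (pt \<times> pt list) set" where
  "hist_states X k = {(x, us). x \<in> X \<and> length us = k \<and> set us \<subseteq> U}"

definition f_hat :: "pt set \<Rightarrow> nat \<Rightarrow> (pt \<times> pt list) \<Rightarrow> pt \<Rightarrow> (pt \<times> pt list)" where
  "f_hat X k s u = (case s of (x, us) \<Rightarrow>
      if k = 0 then (robot_f X x u, [])
      else (robot_f X x (hd us), tl us @ [u]))"

end

theory Submission
  imports Defs
begin

text \<open>After reading a word w from (x, us), the buffer holds the last k letters of us @ w and the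
robot has executed all the others.\<close>

lemma essential_class_whole_iff:
  "essential_class S Sig \<delta> S \<longleftrightarrow> S \<noteq> {} \<and> (\<forall>s\<in>S. \<forall>t\<in>S. reachable Sig \<delta> s t)"
  unfolding essential_class_def by blast

lemma run_Nil [simp]: "run \<delta> s [] = s"
  by (simp add: run_def)

lemma run_Cons [simp]: "run \<delta> s (u # w) = run \<delta> (\<delta> s u) w"
  by (simp add: run_def)

lemma run_append: "run \<delta> s (v @ w) = run \<delta> (run \<delta> s v) w"
  by (simp add: run_def)

lemma reachable_refl: "reachable Sig \<delta> s s"
  unfolding reachable_def by (intro exI[of _ "[]"]) simp

lemma reachable_step: "u \<in> Sig \<Longrightarrow> reachable Sig \<delta> (\<delta> s u) t \<Longrightarrow> reachable Sig \<delta> s t"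
  unfolding reachable_def by (metis insert_subset list.set(2) run_Cons)

lemma adjacent_imp_step:
  assumes "adjacent p q"
  shows "\<exists>u\<in>U. padd p u = q"
proof -
  obtain a b c d where p: "p = (a, b)" and q: "q = (c, d)" by (cases p, cases q)
  have sq: "(c - a)\<^sup>2 + (d - b)\<^sup>2 = 1"
    using assms by (simp add: adjacent_def p q power2_commute)
  then have "(c - a)\<^sup>2 \<le> 1" "(d - b)\<^sup>2 \<le> 1"
    using zero_le_power2[of "c - a"] zero_le_power2[of "d - b"] by linarith+
  then have "c - a \<in> {-1, 0, 1}" "d - b \<in> {-1, 0, 1}"
    by (auto simp: abs_square_le_1 abs_le_iff)
  with sq show ?thesis
    by (auto simp: U_def padd_def p q)
qed

lemma robot_f_in: "x \<in> X \<Longrightarrow> robot_f X x u \<in> X"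
  by (simp add: robot_f_def)

lemma run_robot_f_in: "x \<in> X \<Longrightarrow> run (robot_f X) x w \<in> X"
  by (induction w arbitrary: x) (simp_all add: robot_f_in)

lemma reachable_along_chain:
  assumes "c \<noteq> []" "set c \<subseteq> X" "\<forall>i. Suc i < length c \<longrightarrow> adjacent (c ! i) (c ! Suc i)"
  shows "reachable U (robot_f X) (hd c) (last c)"
  using assms
proof (induction c)
  case Nil
  then show ?case by simp
next
  case (Cons p c)
  show ?case
  proof (cases "c = []")
    case True
    then show ?thesis by (simp add: reachable_refl)
  next
    case False
    have "adjacent p (hd c)"
      using Cons.prems(3)[rule_format, of 0] False by (simp add: hd_conv_nth)
    then obtain u where u: "u \<in> U" "padd p u = hd c"
      using adjacent_imp_step by blast
    have "hd c \<in> X"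
      using False Cons.prems(2) by auto
    with u have "robot_f X p u = hd c"
      by (simp add: robot_f_def)
    moreover have "reachable U (robot_f X) (hd c) (last c)"
      using Cons.IH False Cons.prems(2,3) by fastforce
    ultimately show ?thesis
      using u False by (auto intro: reachable_step)
  qed
qed

lemma grid_connected_reachable:
  "grid_connected X \<Longrightarrow> p \<in> X \<Longrightarrow> q \<in> X \<Longrightarrow> reachable U (robot_f X) p q"
  unfolding grid_connected_def using reachable_along_chain by metis

lemma run_f_hat:
  "length us = k \<Longrightarrow> run (f_hat X k) (x, us) w =
     (run (robot_f X) x (take (length w) (us @ w)), drop (length w) (us @ w))"
proof (induction w arbitrary: x us)
  case Nil
  then show ?case by simp
next
  case (Cons u w)
  show ?case
  proof (cases "us = []")
    case True
    with Cons show ?thesis by (simp add: f_hat_def)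
  next
    case False
    with Cons.prems Cons.IH[of "tl us @ [u]"] show ?thesis
      by (cases us) (simp_all add: f_hat_def del: take_append drop_append)
  qed
qed

lemma run_f_hat_shift:
  assumes "length us = k" "length vs = k"
  shows "run (f_hat X k) (x, us) (w @ vs) = (run (robot_f X) x (us @ w), vs)"
  using run_f_hat[OF assms(1), of X x "w @ vs"] assms by simp

theorem lemma1:
  fixes X :: "(int \<times> int) set" and k :: nat
  assumes "finite X" and "X \<noteq> {}" and "grid_connected X"
  shows "essential_class (hist_states X k) U (f_hat X k) (hist_states X k)"
proof -
  obtain x0 where "x0 \<in> X" using assms(2) by blast
  then have nonempty: "(x0, replicate k (1, 0)) \<in> hist_states X k"
    by (auto simp: hist_states_def U_def)
  have reach: "reachable U (f_hat X k) (x, us) (y, vs)"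
    if "(x, us) \<in> hist_states X k" "(y, vs) \<in> hist_states X k" for x us y vs
  proof -
    from that have hist: "x \<in> X" "length us = k" "y \<in> X" "length vs = k" "set vs \<subseteq> U"
      by (simp_all add: hist_states_def)
    obtain w where w: "set w \<subseteq> U" "run (robot_f X) (run (robot_f X) x us) w = y"
      using grid_connected_reachable[OF assms(3) run_robot_f_in[OF hist(1)] hist(3)]
      by (auto simp: reachable_def)
    have "run (f_hat X k) (x, us) (w @ vs) = (y, vs)"
      using run_f_hat_shift hist w(2) by (simp add: run_append)
    with w(1) hist(5) show ?thesis
      unfolding reachable_def by (intro exI[of _ "w @ vs"]) simp
  qed
  show ?thesis
    unfolding essential_class_whole_iff using nonempty reach by fast
qed

end
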